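(* Let $T$ be a singular weighted tree. Then $T^{\#}$ is a tree if and only if $T$ is a star.
   Context: A weighted tree has a nonzero real weight on each edge; it is singular if its adjacency matrix $A$ ($(i,j)$ entry equal to the weight of edge $v_iv_j$, or $0$ if no edge) is singular. $A^{\#}$ is the group inverse of $A$ (unique $X$ with $AXA=A$, $XAX=X$, $AX=XA$); $T^{\#}$ is the weighted graph on the vertex set of $T$ with $v_iv_j$ an edge iff $(A^{\#})_{ij}\neq 0$, weighted by that entry. *)

theory Defs
  imports "HOL-Analysis.Analysis"
begin

definition graph_connected :: "('v \<Rightarrow> 'v \<Rightarrow> bool) \<Rightarrow> bool" where
  "graph_connected E \<longleftrightarrow> (\<forall>x y. (x, y) \<in> {(a, b). E a b}\<^sup>*)"

definition is_cycle :: "('v \<Rightarrow> 'v \<Rightarrow> bool) \<Rightarrow> 'v list \<Rightarrow> bool" where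
  "is_cycle E vs \<longleftrightarrow> length vs \<ge> 3 \<and> distinct vs \<and>
     (\<forall>i. Suc i < length vs \<longrightarrow> E (vs ! i) (vs ! Suc i)) \<and> E (last vs) (hd vs)"

definition is_tree :: "('v \<Rightarrow> 'v \<Rightarrow> bool) \<Rightarrow> bool" where
  "is_tree E \<longleftrightarrow> graph_connected E \<and> (\<nexists>vs. is_cycle E vs)"

definition is_star :: "('v \<Rightarrow> 'v \<Rightarrow> bool) \<Rightarrow> bool" where
  "is_star E \<longleftrightarrow> is_tree E \<and> (\<exists>c. \<forall>v. v \<noteq> c \<longrightarrow> E c v)"

definition mat_graph :: "real ^ 'n ^ 'n \<Rightarrow> 'n \<Rightarrow> 'n \<Rightarrow> bool" where
  "mat_graph M i j \<longleftrightarrow> i \<noteq> j \<and> M $ i $ j \<noteq> 0"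

definition weighted_adj :: "real ^ 'n ^ 'n \<Rightarrow> bool" where
  "weighted_adj A \<longleftrightarrow> (\<forall>i j. A $ i $ j = A $ j $ i) \<and> (\<forall>i. A $ i $ i = 0)"

definition weighted_tree :: "real ^ 'n ^ 'n \<Rightarrow> bool" where
  "weighted_tree A \<longleftrightarrow> weighted_adj A \<and> is_tree (mat_graph A)"

definition group_inverse :: "real ^ 'n ^ 'n \<Rightarrow> real ^ 'n ^ 'n" where
  "group_inverse A = (THE X. A ** X ** A = A \<and> X ** A ** X = X \<and> A ** X = X ** A)"

end

theory Submission
  imports Defs
begin

text \<open>Let \<open>X\<close> be the group inverse of the adjacency matrix \<open>A\<close> of a singular weighted tree
  \<open>T\<close>, and \<open>P = A X\<close> the orthogonal projection onto the range of \<open>A\<close>. If \<open>T\<close> is a star with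
  centre \<open>c\<close>, then \<open>A\<^sup>3 = s A\<close> with \<open>s\<close> the sum of the squared weights at \<open>c\<close>, so \<open>X = A / s\<close> and
  \<open>T\<^sup>#\<close> is \<open>T\<close> again. Conversely, the support of a nonzero kernel vector of \<open>A\<close> contains a leaf
  \<open>l\<close> of \<open>T\<close>, with neighbour \<open>u\<close> say. Row \<open>u\<close> of \<open>X\<close> is a multiple of row \<open>l\<close> of \<open>P\<close>, so the
  neighbours of \<open>u\<close> in \<open>T\<^sup>#\<close> form the support of a kernel vector of \<open>X\<close>, namely the projection of
  \<open>e\<^sub>l\<close> onto the kernel of \<open>A\<close>. In a tree \<open>T\<^sup>#\<close> this forces \<open>u\<close> to be adjacent to every vertex,
  since otherwise \<open>T\<^sup>#\<close> contains a 4-cycle. Then \<open>T\<^sup>#\<close> has no triangles, so the diagonal entries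
  \<open>P\<^sub>k\<^sub>k = A\<^sub>k\<^sub>u X\<^sub>u\<^sub>k\<close>, which are nonzero, make \<open>T\<close> a star with centre \<open>u\<close>.\<close>

lemma matrix_add_rdistrib: "(A + B) ** C = A ** C + B ** (C :: 'a::semiring_1^'p^'n)"
  by (simp add: matrix_matrix_mult_def vec_eq_iff sum.distrib distrib_right)

lemma matrix_diff_ldistrib: "A ** (B - C) = A ** B - A ** (C :: 'a::ring_1^'p^'n)"
  by (simp add: matrix_matrix_mult_def vec_eq_iff sum_subtractf right_diff_distrib)

lemma matrix_diff_rdistrib: "(A - B) ** C = A ** C - B ** (C :: 'a::ring_1^'p^'n)"
  by (simp add: matrix_matrix_mult_def vec_eq_iff sum_subtractf left_diff_distrib)

lemma sum_UNIV_single: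
  fixes f :: "'a::finite \<Rightarrow> 'b::comm_monoid_add"
  assumes "\<And>k. k \<noteq> p \<Longrightarrow> f k = 0"
  shows "(\<Sum>k\<in>UNIV. f k) = f p"
  using sum.mono_neutral_right[of UNIV "{p}" f] assms by auto

lemma sum_UNIV_zero_other_nonzero:
  fixes f :: "'a::finite \<Rightarrow> 'b::comm_monoid_add"
  assumes "(\<Sum>k\<in>UNIV. f k) = 0" "f p \<noteq> 0"
  obtains k where "k \<noteq> p" "f k \<noteq> 0"
  using sum_UNIV_single[of p f] assms by auto

section \<open>Group inverses of symmetric matrices\<close>

definition is_group_inverse :: "real^'n^'n \<Rightarrow> real^'n^'n \<Rightarrow> bool" where
  "is_group_inverse A X \<longleftrightarrow> A ** X ** A = A \<and> X ** A ** X = X \<and> A ** X = X ** A"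

lemma is_group_inverse_unique:
  assumes "is_group_inverse A X" "is_group_inverse A Y"
  shows "X = Y"
proof -
  from assms have x: "A ** X ** A = A" "X ** A ** X = X" "A ** X = X ** A"
    and y: "A ** Y ** A = A" "Y ** A ** Y = Y" "A ** Y = Y ** A"
    by (auto simp: is_group_inverse_def)
  have XA: "X ** A = A ** Y"
  proof -
    have "X ** A = X ** (A ** Y ** A)" using y(1) by simp
    also have "\<dots> = (X ** A) ** (Y ** A)" by (simp add: matrix_mul_assoc)
    also have "\<dots> = (A ** X) ** (A ** Y)" using x(3) y(3) by simp
    also have "\<dots> = A ** Y" using x(1) by (simp add: matrix_mul_assoc)
    finally show ?thesis .
  qed
  have "X = (Y ** A) ** X" using x(2) XA y(3) by simp
  also have "\<dots> = Y ** (A ** Y)" using x(3) XA by (metis matrix_mul_assoc)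
  also have "\<dots> = Y" using y(2) by (simp add: matrix_mul_assoc)
  finally show ?thesis .
qed

lemma group_inverse_eqI:
  assumes "is_group_inverse A X"
  shows "group_inverse A = X"
  unfolding group_inverse_def is_group_inverse_def[symmetric]
  using assms is_group_inverse_unique by blast

lemma is_group_inverse_transpose:
  assumes "is_group_inverse A X"
  shows "is_group_inverse (transpose A) (transpose X)"
  using assms unfolding is_group_inverse_def
  by (metis matrix_transpose_mul matrix_mul_assoc)

lemma is_group_inverse_from_kernel_projection:
  fixes A Q :: "real^'n^'n"
  assumes AQ: "A ** Q = 0" and QA: "Q ** A = 0" and QQ: "Q ** Q = Q"
    and kernel: "\<And>x. A *v x = 0 \<Longrightarrow> Q *v x = x"
  shows "\<exists>X. is_group_inverse A X"
proof -
  have "x = 0" if "(A + Q) *v x = 0" for x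
  proof -
    have sum0: "A *v x + Q *v x = 0"
      using that by (simp add: matrix_vector_mult_add_rdistrib)
    have "Q *v x = Q *v (A *v x + Q *v x)"
      using QA QQ by (simp add: matrix_vector_right_distrib matrix_vector_mul_assoc)
    then have "Q *v x = 0" using sum0 by simp
    then show "x = 0" using sum0 kernel[of x] by simp
  qed
  \<comment> \<open>\<open>A + Q\<close> acts as \<open>A\<close> on the range of \<open>A\<close> and as the identity on its kernel, so
    \<open>(A + Q)\<^sup>-\<^sup>1 - Q\<close> inverts \<open>A\<close> on its range and vanishes on its kernel.\<close>
  then obtain N where NM: "N ** (A + Q) = mat 1"
    using matrix_left_invertible_ker by blast
  then have MN: "(A + Q) ** N = mat 1"
    using matrix_left_right_inverse by blast
  have NQ: "N ** Q = Q"
    using NM AQ QQ by (metis add_0 matrix_add_rdistrib matrix_mul_assoc matrix_mul_lid)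
  have QN: "Q ** N = Q"
    using MN QA QQ by (metis add_0 matrix_add_ldistrib matrix_mul_assoc matrix_mul_rid)
  have AN: "A ** N = mat 1 - Q"
    using MN QN by (simp add: matrix_add_rdistrib algebra_simps)
  have NA: "N ** A = mat 1 - Q"
    using NM NQ by (simp add: matrix_add_ldistrib algebra_simps)
  have AX: "A ** (N - Q) = mat 1 - Q" and XA: "(N - Q) ** A = mat 1 - Q"
    using AN NA AQ QA by (simp_all add: matrix_diff_ldistrib matrix_diff_rdistrib)
  have "A ** (N - Q) ** A = A"
    using AX QA by (simp add: matrix_diff_rdistrib)
  moreover have "(N - Q) ** A ** (N - Q) = N - Q"
    using XA QN QQ by (simp add: matrix_diff_ldistrib matrix_diff_rdistrib)
  ultimately have "is_group_inverse A (N - Q)"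
    using AX XA unfolding is_group_inverse_def by simp
  then show ?thesis ..
qed

lemma weighted_adj_transpose: "weighted_adj A \<Longrightarrow> transpose A = A"
  unfolding weighted_adj_def transpose_def by (simp add: vec_eq_iff)

lemma symmetric_matrix_entry: "transpose A = A \<Longrightarrow> A $ i $ j = A $ j $ i"
  by (metis transpose_def vec_lambda_beta)

lemma symmetric_matrix_inner:
  fixes A :: "real^'n^'n"
  assumes "transpose A = A"
  shows "(A *v x) \<bullet> y = x \<bullet> (A *v y)"
  by (metis assms dot_lmul_matrix transpose_matrix_vector)

lemma symmetric_range_kernel_decomposition:
  fixes A :: "real^'n^'n"
  assumes "transpose A = A"
  obtains v z where "A *v z = 0" "x = A *v v + z"
proof -
  let ?R = "range (\<lambda>v. A *v v)"
  obtain y z where y: "y \<in> span ?R" and z: "\<And>w. w \<in> span ?R \<Longrightarrow> orthogonal z w"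
    and xyz: "x = y + z"
    using orthogonal_subspace_decomp_exists[of ?R x] by blast
  have "subspace ?R"
    using linear_subspace_image[OF matrix_vector_mul_linear subspace_UNIV] by (simp add: image_def)
  then have span_R: "span ?R = ?R" by (simp only: span_eq_iff)
  then obtain v where "y = A *v v" using y by blast
  moreover have "orthogonal z (A *v (A *v z))" using z span_R by auto
  then have "(A *v z) \<bullet> (A *v z) = 0"
    by (simp add: orthogonal_def symmetric_matrix_inner[OF assms])
  then have "A *v z = 0" by simp
  ultimately show ?thesis using xyz that by blast
qed

lemma symmetric_range_kernel_decomposition_unique:
  fixes A :: "real^'n^'n"
  assumes "transpose A = A" "A *v z = 0" "A *v z' = 0" "A *v v + z = A *v v' + z'"
  shows "z = z'"
proof -
  have "A *v (v - v') = z' - z" using assms(4)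
    by (simp add: matrix_vector_mult_diff_distrib algebra_simps)
  then have "(z' - z) \<bullet> (z' - z) = (v - v') \<bullet> (A *v (z' - z))"
    by (metis symmetric_matrix_inner[OF assms(1)])
  also have "\<dots> = 0" using assms(2,3) by (simp add: matrix_vector_mult_diff_distrib)
  finally show ?thesis by simp
qed

lemma symmetric_kernel_projection_exists:
  fixes A :: "real^'n^'n"
  assumes sym: "transpose A = A"
  obtains Q where "A ** Q = 0" "Q ** A = 0" "Q ** Q = Q" "\<And>x. A *v x = 0 \<Longrightarrow> Q *v x = x"
proof -
  define q where "q x = (SOME z. A *v z = 0 \<and> (\<exists>v. x = A *v v + z))" for x :: "real^'n"
  have q: "A *v q x = 0 \<and> (\<exists>v. x = A *v v + q x)" for x
    unfolding q_def
    by (rule someI_ex) (metis symmetric_range_kernel_decomposition[OF sym])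
  have q_eqI: "q x = z" if "A *v z = 0" "x = A *v v + z" for x z v
    using q[of x] that symmetric_range_kernel_decomposition_unique[OF sym] by metis
  have "linear q"
  proof (rule linearI)
    fix x y
    obtain v w where "x = A *v v + q x" "y = A *v w + q y" using q by blast
    then show "q (x + y) = q x + q y"
      by (intro q_eqI[where v = "v + w"])
        (use q in \<open>auto simp: matrix_vector_right_distrib algebra_simps\<close>)
  next
    fix c :: real and x
    obtain v where "x = A *v v + q x" using q by blast
    then show "q (c *\<^sub>R x) = c *\<^sub>R q x"
      by (intro q_eqI[where v = "c *\<^sub>R v"])
        (use q in \<open>metis matrix_vector_mult_scaleR scaleR_add_right scaleR_zero_right\<close>)+
  qed
  then have Qv: "matrix q *v x = q x" for x
    by (simp add: matrix_works)
  show ?thesis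
  proof (rule that[of "matrix q"])
    show "A ** matrix q = 0"
      by (simp add: matrix_eq matrix_vector_mul_assoc[symmetric] Qv q)
    show "matrix q ** A = 0"
      by (simp add: matrix_eq matrix_vector_mul_assoc[symmetric] Qv q_eqI[of 0])
    show "matrix q ** matrix q = matrix q"
      by (simp add: matrix_eq matrix_vector_mul_assoc[symmetric] Qv) (metis q q_eqI add_0)
    show "matrix q *v x = x" if "A *v x = 0" for x
      using q_eqI[of x x 0] that by (simp add: Qv)
  qed
qed

lemma symmetric_group_inverse:
  fixes A :: "real^'n^'n"
  assumes "transpose A = A"
  shows "is_group_inverse A (group_inverse A)" "transpose (group_inverse A) = group_inverse A"
proof -
  obtain X where X: "is_group_inverse A X"
    using symmetric_kernel_projection_exists[OF assms] is_group_inverse_from_kernel_projection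
    by metis
  then show "is_group_inverse A (group_inverse A)" by (simp add: group_inverse_eqI)
  have "group_inverse A = transpose X"
    using is_group_inverse_transpose[OF X] assms by (simp add: group_inverse_eqI)
  then show "transpose (group_inverse A) = group_inverse A"
    using X by (simp add: group_inverse_eqI)
qed

lemma symmetric_range_projection:
  fixes A :: "real^'n^'n"
  assumes "transpose A = A"
  defines "X \<equiv> group_inverse A"
  defines "P \<equiv> A ** X"
  shows "transpose P = P" "P ** P = P" "P ** A = A" "A ** P = A" "X ** P = X" "X ** A = P"
proof -
  have gi: "A ** X ** A = A" "X ** A ** X = X" "A ** X = X ** A" "transpose X = X"
    using symmetric_group_inverse[OF assms(1)] by (auto simp: X_def is_group_inverse_def)
  show "transpose P = P" using gi assms(1) by (simp add: P_def matrix_transpose_mul)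
  show "P ** P = P" "P ** A = A" "A ** P = A" "X ** P = X" "X ** A = P"
    using gi by (simp_all add: P_def matrix_mul_assoc) (metis matrix_mul_assoc)+
qed

lemma symmetric_idempotent_diag:
  fixes P :: "real^'n^'n"
  assumes "transpose P = P" "P ** P = P"
  shows "P $ i $ i = (\<Sum>k\<in>UNIV. (P $ i $ k)\<^sup>2)"
proof -
  have "P $ i $ i = (P ** P) $ i $ i" using assms(2) by simp
  also have "\<dots> = (\<Sum>k\<in>UNIV. (P $ i $ k)\<^sup>2)"
    using symmetric_matrix_entry[OF assms(1)]
    by (simp add: matrix_matrix_mult_def power2_eq_square)
  finally show ?thesis .
qed

lemma range_projection_diag_nonzero:
  fixes A :: "real^'n^'n"
  assumes "transpose A = A" "A $ i $ j \<noteq> 0"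
  shows "(A ** group_inverse A) $ i $ i \<noteq> 0"
proof
  let ?P = "A ** group_inverse A"
  note P = symmetric_range_projection[OF assms(1)]
  assume "?P $ i $ i = 0"
  then have "(\<Sum>k\<in>UNIV. (?P $ i $ k)\<^sup>2) = 0"
    using symmetric_idempotent_diag[OF P(1,2)] by simp
  then have "?P $ i $ k = 0" for k
    by (simp add: sum_nonneg_eq_0_iff)
  then have "(?P ** A) $ i $ j = 0" by (simp add: matrix_matrix_mult_def)
  then show False using P(3) assms(2) by simp
qed

lemma range_projection_diag_ne_one:
  fixes A :: "real^'n^'n"
  assumes "transpose A = A" "A *v z = 0" "z $ l \<noteq> 0"
  shows "(A ** group_inverse A) $ l $ l \<noteq> 1"
proof
  let ?P = "A ** group_inverse A"
  note P = symmetric_range_projection[OF assms(1)]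
  assume Pll: "?P $ l $ l = 1"
  have "(\<Sum>k\<in>UNIV. (?P $ l $ k)\<^sup>2) = (?P $ l $ l)\<^sup>2 + (\<Sum>k\<in>UNIV - {l}. (?P $ l $ k)\<^sup>2)"
    by (simp add: sum.remove)
  then have "(\<Sum>k\<in>UNIV - {l}. (?P $ l $ k)\<^sup>2) = 0"
    using Pll symmetric_idempotent_diag[OF P(1,2), of l] by simp
  then have "?P $ l $ k = 0" if "k \<noteq> l" for k
    using that by (simp add: sum_nonneg_eq_0_iff)
  then have "(?P *v z) $ l = z $ l"
    using Pll sum_UNIV_single[of l "\<lambda>k. ?P $ l $ k * z $ k"] by (simp add: matrix_vector_mult_def)
  moreover have "?P *v z = 0"
    using assms(2) by (simp flip: P(6) matrix_vector_mul_assoc)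
  ultimately show False using assms(3) by simp
qed

section \<open>Cycles in finite graphs\<close>

lemma is_cycle_triangle:
  assumes "distinct [a, b, c]" "E a b" "E b c" "E c a"
  shows "is_cycle E [a, b, c]"
proof -
  have "E ([a, b, c] ! i) ([a, b, c] ! Suc i)" if "Suc i < 3" for i
    using assms that less_Suc_eq by (cases i) auto
  then show ?thesis using assms unfolding is_cycle_def by auto
qed

lemma is_cycle_square:
  assumes "distinct [a, b, c, d]" "E a b" "E b c" "E c d" "E d a"
  shows "is_cycle E [a, b, c, d]"
proof -
  have "E ([a, b, c, d] ! i) ([a, b, c, d] ! Suc i)" if "Suc i < 4" for i
  proof -
    have "i = 0 \<or> i = 1 \<or> i = 2" using that by auto
    then show ?thesis using assms by (auto simp: numeral_2_eq_2)
  qed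
  then show ?thesis using assms unfolding is_cycle_def by auto
qed

lemma graph_connected_neighbour:
  assumes "graph_connected E" "x \<noteq> y"
  obtains z where "E x z"
proof -
  have "(x, y) \<in> {(a, b). E a b}\<^sup>*" using assms(1) by (simp add: graph_connected_def)
  then show ?thesis using assms(2) that by (cases rule: converse_rtranclE) auto
qed

lemma nonbacktracking_walk_exists:
  assumes "E a b" "a \<in> W" "b \<in> W"
    and extend: "\<And>p c. E p c \<Longrightarrow> p \<in> W \<Longrightarrow> c \<in> W \<Longrightarrow> \<exists>d\<in>W. E c d \<and> d \<noteq> p"
  obtains v where "\<And>k. E (v k) (v (Suc k))" "\<And>k. v (Suc (Suc k)) \<noteq> v k"
proof -
  define next_edge where
    "next_edge e = (snd e, SOME d. d \<in> W \<and> E (snd e) d \<and> d \<noteq> fst e)" for e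
  have next_edge: "fst (next_edge e) = snd e \<and> snd (next_edge e) \<in> W \<and>
      E (snd e) (snd (next_edge e)) \<and> snd (next_edge e) \<noteq> fst e"
    if "E (fst e) (snd e)" "fst e \<in> W" "snd e \<in> W" for e
  proof -
    have "\<exists>d. d \<in> W \<and> E (snd e) d \<and> d \<noteq> fst e" using extend[OF that] by blast
    from someI_ex[OF this] show ?thesis by (simp add: next_edge_def)
  qed
  define g where "g k = (next_edge ^^ k) (a, b)" for k
  have g_Suc: "g (Suc k) = next_edge (g k)" for k
    by (simp add: g_def)
  have edge: "E (fst (g k)) (snd (g k)) \<and> fst (g k) \<in> W \<and> snd (g k) \<in> W" for k
    by (induction k) (use assms(1-3) next_edge in \<open>auto simp: g_def g_Suc\<close>)
  show ?thesis
  proof (rule that[of "\<lambda>k. fst (g k)"])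
    fix k
    show "E (fst (g k)) (fst (g (Suc k)))" "fst (g (Suc (Suc k))) \<noteq> fst (g k)"
      using edge[of k] next_edge[of "g k"] next_edge[of "g (Suc k)"] edge[of "Suc k"]
      by (simp_all add: g_Suc)
  qed
qed

lemma nonbacktracking_walk_cycle:
  fixes v :: "nat \<Rightarrow> 'v::finite"
  assumes irrefl: "\<And>x. \<not> E x x"
    and walk: "\<And>k. E (v k) (v (Suc k))" and nonbacktracking: "\<And>k. v (Suc (Suc k)) \<noteq> v k"
  shows "\<exists>vs. is_cycle E vs"
proof -
  have "\<not> inj v"
  proof
    assume "inj v"
    then have "infinite (range v)" using finite_imageD by blast
    then show False by simp
  qed
  then have repeat: "\<exists>j. \<exists>i<j. v i = v j"
    unfolding inj_def by (metis linorder_neqE_nat)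
  define j where "j = (LEAST j. \<exists>i<j. v i = v j)"
  obtain i where ij: "i < j" "v i = v j"
    using LeastI_ex[OF repeat] unfolding j_def by blast
  have first_repeat: "v a \<noteq> v b" if "a < b" "b < j" for a b
    using not_less_Least[of b "\<lambda>j. \<exists>i<j. v i = v j"] that unfolding j_def by blast
  define vs where "vs = map v [i..<j]"
  have "j \<noteq> Suc i" using walk[of i] ij irrefl by metis
  moreover have "j \<noteq> Suc (Suc i)" using nonbacktracking[of i] ij by metis
  ultimately have "length vs \<ge> 3" using ij by (simp add: vs_def)
  moreover have "distinct vs"
    unfolding vs_def distinct_conv_nth
  proof (intro allI impI)
    fix a b assume "a < length (map v [i..<j])" "b < length (map v [i..<j])" "a \<noteq> b"
    then have "i + a < j" "i + b < j" "i + a \<noteq> i + b" by auto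
    then have "v (i + a) \<noteq> v (i + b)"
      using first_repeat[of "i + a" "i + b"] first_repeat[of "i + b" "i + a"]
      by (cases "a < b") auto
    then show "map v [i..<j] ! a \<noteq> map v [i..<j] ! b"
      using \<open>a < length (map v [i..<j])\<close> \<open>b < length (map v [i..<j])\<close> by simp
  qed
  moreover have "E (vs ! k) (vs ! Suc k)" if "Suc k < length vs" for k
    using that walk[of "i + k"] by (simp add: vs_def)
  moreover have "E (last vs) (hd vs)"
  proof -
    have "last vs = v (j - 1)" using ij by (simp add: vs_def last_map)
    moreover have "hd vs = v j" using ij by (simp add: vs_def hd_map upt_conv_Cons)
    ultimately show ?thesis using walk[of "j - 1"] ij by simp
  qed
  ultimately have "is_cycle E vs" unfolding is_cycle_def by blast
  then show ?thesis by blast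
qed

section \<open>Leaves, kernel vectors and the group inverse graph\<close>

lemma tree_kernel_vector_leaf:
  fixes A :: "real^'n^'n"
  assumes wt: "weighted_tree A" and nb: "\<And>x. \<exists>y. mat_graph A x y"
    and Az: "A *v z = 0" and "z \<noteq> 0"
  obtains l u where "z $ l \<noteq> 0" "\<And>k. mat_graph A l k \<longleftrightarrow> k = u"
proof -
  let ?E = "mat_graph A"
  have diag: "A $ i $ i = 0" for i
    using wt by (simp add: weighted_tree_def weighted_adj_def)
  have E_sym: "?E x y \<longleftrightarrow> ?E y x" for x y
    using wt by (auto simp: weighted_tree_def weighted_adj_def mat_graph_def)
  have "\<exists>l u. z $ l \<noteq> 0 \<and> (\<forall>k. ?E l k \<longleftrightarrow> k = u)"
  proof (rule ccontr)
    assume no_leaf: "\<not> ?thesis"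
    \<comment> \<open>Then a non-backtracking walk never gets stuck in the support of \<open>z\<close> and its neighbours:
      at a vertex outside the support, \<open>(A z)\<^sub>c = 0\<close> forces a second neighbour inside it.\<close>
    define W where "W = {x. z $ x \<noteq> 0 \<or> (\<exists>s. z $ s \<noteq> 0 \<and> ?E x s)}"
    obtain a where a: "z $ a \<noteq> 0" using \<open>z \<noteq> 0\<close> by (auto simp: vec_eq_iff)
    obtain b where b: "?E a b" using nb by blast
    have aW: "a \<in> W" and bW: "b \<in> W" using a b E_sym by (auto simp: W_def)
    have extend: "\<exists>d\<in>W. ?E c d \<and> d \<noteq> p" if pc: "?E p c" "p \<in> W" "c \<in> W" for p c
    proof (cases "z $ c = 0")
      case False
      then have "\<not> (\<forall>k. ?E c k \<longleftrightarrow> k = p)" using no_leaf by blast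
      then obtain d where "?E c d" "d \<noteq> p" using pc(1) E_sym by blast
      then show ?thesis using False E_sym by (auto simp: W_def)
    next
      case True
      then obtain s where s: "z $ s \<noteq> 0" "?E c s" using pc(3) by (auto simp: W_def)
      have row: "(\<Sum>k\<in>UNIV. A $ c $ k * z $ k) = 0"
        using Az by (simp add: vec_eq_iff matrix_vector_mult_def)
      obtain d where d: "d \<noteq> p" "A $ c $ d * z $ d \<noteq> 0"
      proof (cases "s = p")
        case True
        then show ?thesis
          using sum_UNIV_zero_other_nonzero[OF row, of p] s that by (auto simp: mat_graph_def)
      qed (use s that in \<open>auto simp: mat_graph_def\<close>)
      then have "d \<noteq> c" using diag[of c] by auto
      then show ?thesis using d by (auto simp: W_def mat_graph_def)
    qed
    obtain v where walk: "\<And>k. ?E (v k) (v (Suc k))" and "\<And>k. v (Suc (Suc k)) \<noteq> v k"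
      using nonbacktracking_walk_exists[of ?E a b W, OF b aW bW extend] by blast
    then have "\<exists>vs. is_cycle ?E vs"
      using walk by (intro nonbacktracking_walk_cycle[of ?E v]) (auto simp: mat_graph_def)
    then show False using wt by (simp add: weighted_tree_def is_tree_def)
  qed
  then show ?thesis using that by blast
qed

lemma leaf_row_mult:
  fixes A :: "real^'n^'n"
  assumes "weighted_adj A" and leaf: "\<And>k. mat_graph A l k \<longleftrightarrow> k = u"
  shows "(A ** B) $ l $ j = A $ l $ u * B $ u $ j" "(A *v y) $ l = A $ l $ u * y $ u"
proof -
  have "A $ l $ k = 0" if "k \<noteq> u" for k
    using leaf[of k] that assms(1) by (cases "k = l") (auto simp: mat_graph_def weighted_adj_def)
  then show "(A ** B) $ l $ j = A $ l $ u * B $ u $ j" "(A *v y) $ l = A $ l $ u * y $ u"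
    unfolding matrix_matrix_mult_def matrix_vector_mult_def
    by (simp_all add: sum_UNIV_single[of u])
qed

lemma leaf_neighbour_group_inverse_neighbours:
  fixes A :: "real^'n^'n"
  assumes wa: "weighted_adj A" and leaf: "\<And>k. mat_graph A l k \<longleftrightarrow> k = u"
    and "A *v z = 0" "z $ l \<noteq> 0"
  obtains w where "group_inverse A *v w = 0"
    "\<And>j. mat_graph (group_inverse A) u j \<longleftrightarrow> w $ j \<noteq> 0"
proof -
  define X where "X = group_inverse A"
  define P where "P = A ** X"
  have tA: "transpose A = A" using wa by (rule weighted_adj_transpose)
  note P = symmetric_range_projection[OF tA, folded X_def, folded P_def]
  have Alu: "A $ l $ u \<noteq> 0" "l \<noteq> u" using leaf[of u] by (auto simp: mat_graph_def)
  have Pll: "P $ l $ l \<noteq> 0" "P $ l $ l \<noteq> 1"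
    using range_projection_diag_nonzero[OF tA Alu(1)] range_projection_diag_ne_one[OF tA assms(3,4)]
    by (simp_all add: P_def X_def)
  have P_row: "P $ l $ j = A $ l $ u * X $ u $ j" for j
    unfolding P_def by (rule leaf_row_mult[OF wa leaf])
  \<comment> \<open>the orthogonal projection of \<open>e\<^sub>l\<close> onto the kernel of \<open>A\<close>\<close>
  define w where "w = axis l 1 - P *v axis l 1"
  have w: "w $ j = (if j = l then 1 else 0) - P $ l $ j" for j
    using symmetric_matrix_entry[OF P(1)]
    unfolding w_def matrix_vector_mult_basis by (simp add: column_def axis_def)
  have "A *v w = 0"
    by (simp add: w_def matrix_vector_mult_diff_distrib matrix_vector_mul_assoc P(4))
  then have "w $ u = 0"
    using leaf_row_mult(2)[OF wa leaf, of w] Alu by simp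
  moreover have "X *v w = 0"
    by (simp add: w_def matrix_vector_mult_diff_distrib matrix_vector_mul_assoc P(5))
  moreover have "mat_graph X u j \<longleftrightarrow> w $ j \<noteq> 0" for j
    using P_row[of j] w[of j] Alu Pll \<open>w $ u = 0\<close> symmetric_matrix_entry[OF P(1), of l l]
    by (cases "j = l") (auto simp: mat_graph_def)
  ultimately show ?thesis using that by (simp add: X_def)
qed

lemma kernel_support_neighbourhood_universal:
  fixes X :: "real^'n^'n"
  assumes sym: "transpose X = X" and tree: "is_tree (mat_graph X)" and Xw: "X *v w = 0"
    and nbhd: "\<And>j. mat_graph X u j \<longleftrightarrow> w $ j \<noteq> 0" and "v \<noteq> u"
  shows "mat_graph X u v"
proof -
  let ?F = "mat_graph X"
  have F_sym: "?F x y \<longleftrightarrow> ?F y x" for x y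
    using symmetric_matrix_entry[OF sym] by (auto simp: mat_graph_def)
  have closed: "?F u y" if uj: "?F u j" and jy: "?F j y" and yu: "y \<noteq> u" for j y
  proof (rule ccontr)
    assume "\<not> ?F u y"
    then have "w $ y = 0" using nbhd by simp
    have "(\<Sum>k\<in>UNIV. X $ y $ k * w $ k) = 0"
      using Xw by (simp add: vec_eq_iff matrix_vector_mult_def)
    moreover have "X $ y $ j * w $ j \<noteq> 0"
      using uj jy nbhd F_sym by (auto simp: mat_graph_def)
    ultimately obtain k where k: "k \<noteq> j" "X $ y $ k * w $ k \<noteq> 0"
      by (rule sum_UNIV_zero_other_nonzero)
    then have "k \<noteq> y" using \<open>w $ y = 0\<close> by auto
    then have "?F y k" "?F k u" using k nbhd F_sym by (auto simp: mat_graph_def)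
    moreover have "distinct [u, j, y, k]"
      using uj jy yu k \<open>k \<noteq> y\<close> \<open>\<not> ?F u y\<close> \<open>?F k u\<close> by (auto simp: mat_graph_def)
    ultimately have "is_cycle ?F [u, j, y, k]"
      using uj jy by (intro is_cycle_square)
    then show False using tree by (simp add: is_tree_def)
  qed
  have "v = u \<or> ?F u v" if "(u, v) \<in> {(a, b). ?F a b}\<^sup>*" for v
    using that by (induction rule: rtrancl_induct) (use closed in auto)
  then show ?thesis using tree \<open>v \<noteq> u\<close> by (auto simp: is_tree_def graph_connected_def)
qed

lemma group_inverse_star_centre_adjacent:
  fixes A :: "real^'n^'n"
  assumes wa: "weighted_adj A" and tree: "is_tree (mat_graph (group_inverse A))"
    and centre: "\<And>v. v \<noteq> u \<Longrightarrow> mat_graph (group_inverse A) u v"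
    and "k \<noteq> u" "A $ k $ j \<noteq> 0"
  shows "A $ k $ u \<noteq> 0"
proof -
  let ?X = "group_inverse A"
  have tA: "transpose A = A" using wa by (rule weighted_adj_transpose)
  have X_sym: "?X $ i $ j = ?X $ j $ i" for i j
    using symmetric_matrix_entry[OF symmetric_group_inverse(2)[OF tA]] .
  have "?X $ m $ k = 0" if "m \<noteq> u" "m \<noteq> k" for m
  proof (rule ccontr)
    assume "?X $ m $ k \<noteq> 0"
    then have "is_cycle (mat_graph ?X) [u, m, k]"
      using that \<open>k \<noteq> u\<close> centre[of m] centre[of k] X_sym[of k u]
      by (intro is_cycle_triangle) (auto simp: mat_graph_def)
    then show False using tree by (simp add: is_tree_def)
  qed
  moreover have "A $ k $ k = 0" using wa by (simp add: weighted_adj_def)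
  ultimately have "(\<Sum>m\<in>UNIV. A $ k $ m * ?X $ m $ k) = A $ k $ u * ?X $ u $ k"
    by (intro sum_UNIV_single) (metis mult_zero_left mult_zero_right)
  then have "(A ** ?X) $ k $ k = A $ k $ u * ?X $ u $ k"
    by (simp add: matrix_matrix_mult_def)
  then show ?thesis using range_projection_diag_nonzero[OF tA assms(5)] by auto
qed

lemma group_inverse_tree_imp_star:
  fixes A :: "real^'n^'n"
  assumes wt: "weighted_tree A" and "\<not> invertible A"
    and tree: "is_tree (mat_graph (group_inverse A))"
  shows "is_star (mat_graph A)"
proof (cases "\<exists>x y :: 'n. x \<noteq> y")
  case False
  then show ?thesis using wt by (auto simp: is_star_def weighted_tree_def)
next
  case True
  have wa: "weighted_adj A" and conn: "graph_connected (mat_graph A)"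
    using wt by (auto simp: weighted_tree_def is_tree_def)
  have nb: "\<exists>y. mat_graph A x y" for x
    using True graph_connected_neighbour[OF conn] by metis
  obtain z where z: "A *v z = 0" "z \<noteq> 0"
    using \<open>\<not> invertible A\<close> matrix_left_invertible_ker invertible_left_inverse by blast
  then obtain l u where "z $ l \<noteq> 0" and leaf: "\<And>k. mat_graph A l k \<longleftrightarrow> k = u"
    using tree_kernel_vector_leaf[OF wt nb] by metis
  then obtain w where "group_inverse A *v w = 0"
    and "\<And>j. mat_graph (group_inverse A) u j \<longleftrightarrow> w $ j \<noteq> 0"
    using leaf_neighbour_group_inverse_neighbours[OF wa leaf z(1)] by metis
  then have centre: "mat_graph (group_inverse A) u v" if "v \<noteq> u" for v
    using kernel_support_neighbourhood_universal[OF
        symmetric_group_inverse(2)[OF weighted_adj_transpose[OF wa]] tree] that by blast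
  have "A $ u $ k \<noteq> 0" if "k \<noteq> u" for k
    using nb[of k] group_inverse_star_centre_adjacent[OF wa tree centre that] wa
    by (auto simp: mat_graph_def weighted_adj_def)
  then show ?thesis
    using wt unfolding is_star_def weighted_tree_def mat_graph_def by blast
qed

section \<open>Stars\<close>

lemma star_adjacency_cube:
  fixes A :: "real^'n^'n"
  assumes wa: "weighted_adj A" and off_centre: "\<And>i j. i \<noteq> c \<Longrightarrow> j \<noteq> c \<Longrightarrow> A $ i $ j = 0"
  shows "A ** A ** A = (\<Sum>k\<in>UNIV. (A $ c $ k)\<^sup>2) *\<^sub>R A"
proof -
  define s where "s = (\<Sum>k\<in>UNIV. (A $ c $ k)\<^sup>2)"
  have leaf_entry: "(A *v y) $ i = A $ i $ c * y $ c" if "i \<noteq> c" for i y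
    unfolding matrix_vector_mult_def using off_centre[OF that]
    by (simp add: sum_UNIV_single[of c])
  have centre_entry: "(A *v (A *v y)) $ c = s * y $ c" for y
  proof -
    have "(A *v (A *v y)) $ c = (\<Sum>k\<in>UNIV. (A $ c $ k)\<^sup>2 * y $ c)"
      unfolding matrix_vector_mult_def[of A "A *v y"] vec_lambda_beta
    proof (rule sum.cong)
      fix k
      show "A $ c $ k * (A *v y) $ k = (A $ c $ k)\<^sup>2 * y $ c"
        using leaf_entry[of k y] wa by (cases "k = c") (auto simp: weighted_adj_def power2_eq_square)
    qed simp
    then show ?thesis by (simp add: s_def sum_distrib_right)
  qed
  have "(A *v (A *v (A *v x))) $ i = (s *\<^sub>R (A *v x)) $ i" for x i
  proof (cases "i = c")
    case False
    then show ?thesis using leaf_entry[of i] centre_entry[of x] by simp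
  qed (simp add: centre_entry)
  then have "A *v (A *v (A *v x)) = s *\<^sub>R (A *v x)" for x
    by (simp add: vec_eq_iff)
  then show ?thesis
    by (simp add: matrix_eq matrix_vector_mul_assoc[symmetric] s_def scaleR_matrix_vector_assoc)
qed

lemma star_group_inverse:
  fixes A :: "real^'n^'n"
  assumes wa: "weighted_adj A" and off_centre: "\<And>i j. i \<noteq> c \<Longrightarrow> j \<noteq> c \<Longrightarrow> A $ i $ j = 0"
  shows "group_inverse A = (1 / (\<Sum>k\<in>UNIV. (A $ c $ k)\<^sup>2)) *\<^sub>R A"
proof (cases "(\<Sum>k\<in>UNIV. (A $ c $ k)\<^sup>2) = 0")
  case True
  then have "A $ c $ k = 0" for k
    by (simp add: sum_nonneg_eq_0_iff)
  moreover have "A $ i $ c = A $ c $ i" for i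
    using wa by (simp add: weighted_adj_def)
  ultimately have "A $ i $ j = 0" for i j
    using off_centre by (cases "i = c"; cases "j = c") auto
  then have "A = 0" by (simp add: vec_eq_iff)
  then show ?thesis
    by (simp add: group_inverse_eqI is_group_inverse_def)
next
  case False
  have "is_group_inverse A ((1 / (\<Sum>k\<in>UNIV. (A $ c $ k)\<^sup>2)) *\<^sub>R A)"
    using False star_adjacency_cube[OF assms]
    by (simp add: is_group_inverse_def matrix_scalar_ac scalar_matrix_assoc[symmetric])
  then show ?thesis by (rule group_inverse_eqI)
qed

lemma star_group_inverse_graph:
  fixes A :: "real^'n^'n"
  assumes wt: "weighted_tree A" and star: "is_star (mat_graph A)"
  shows "mat_graph (group_inverse A) = mat_graph A"
proof -
  have wa: "weighted_adj A" and tree: "is_tree (mat_graph A)"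
    using wt by (auto simp: weighted_tree_def)
  obtain c where c: "\<And>v. v \<noteq> c \<Longrightarrow> mat_graph A c v"
    using star by (auto simp: is_star_def)
  have off_centre: "A $ i $ j = 0" if "i \<noteq> c" "j \<noteq> c" for i j
  proof (rule ccontr)
    assume "A $ i $ j \<noteq> 0"
    then have "is_cycle (mat_graph A) [c, i, j]"
      using that c[of i] c[of j] wa by (intro is_cycle_triangle) (auto simp: mat_graph_def weighted_adj_def)
    then show False using tree by (simp add: is_tree_def)
  qed
  let ?s = "\<Sum>k\<in>UNIV. (A $ c $ k)\<^sup>2"
  have "mat_graph ((1 / ?s) *\<^sub>R A) i j = mat_graph A i j" for i j
  proof (cases "i = j")
    case False
    then have "i \<noteq> c \<or> j \<noteq> c" by blast
    then obtain v where "v \<noteq> c" by blast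
    then have "0 < (A $ c $ v)\<^sup>2" using c by (simp add: mat_graph_def)
    also have "\<dots> \<le> ?s" by (rule member_le_sum) auto
    finally show ?thesis by (simp add: mat_graph_def)
  qed (simp add: mat_graph_def)
  moreover have "group_inverse A = (1 / ?s) *\<^sub>R A"
    by (rule star_group_inverse[OF wa off_centre])
  ultimately show ?thesis by auto
qed

theorem lemma2p11:
  fixes A :: "real ^ 'n ^ 'n"
  assumes "weighted_tree A"
    and "\<not> invertible A"
  shows "is_tree (mat_graph (group_inverse A)) \<longleftrightarrow> is_star (mat_graph A)"
proof
  assume "is_tree (mat_graph (group_inverse A))"
  then show "is_star (mat_graph A)" by (rule group_inverse_tree_imp_star[OF assms])
next
  assume "is_star (mat_graph A)"
  then show "is_tree (mat_graph (group_inverse A))"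
    using star_group_inverse_graph[OF assms(1)] by (simp add: is_star_def)
qed

end
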